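(* There is an absolute constant $C>0$ such that for every $p\in(0,1/2]$, every simple shape $\tau$ and every even integer $t\ge2$, with $\mathbf M_\tau$ the graph matrix of $\tau$ for the $p$-biased random graph, $$\mathbb E\|\mathbf M_\tau\|_{2t}^{2t}\le\Big(n^{|V(\tau)|}(Ct)^{t|E(\tau)|}|V(\tau)|^{t|V(\tau)|}\Big)\max_{U_\tau\cap V_\tau\subseteq S\subseteq V(\tau)}\Big(\frac{1-p}{p}\Big)^{t|E(S)|}n^{t(|V(\tau)|-|S|)}.$$
   Context: $p$-biased random graph: variables $G_{i,j}=G_{j,i}$, $i\ne j\in[n]$, independent, each equal to $-\sqrt{(1-p)/p}$ with probability $p$ and $\sqrt{p/(1-p)}$ with probability $1-p$. A shape $\tau=(V(\tau),E(\tau),U_\tau,V_\tau)$ is a finite graph with two ordered subsets $U_\tau,V_\tau\subseteq V(\tau)$; a realization is an injective $\varphi:V(\tau)\to[n]$; $\mathcal I$ is the set of tuples of distinct elements of $[n]$ (including the empty tuple); $\mathbf M_\tau\in\mathbb R^{\mathcal I\times\mathcal I}$ has $\mathbf M_\tau[I,J]=\sum_\varphi\prod_{\{u,v\}\in E(\tau)}G_{\varphi(u),\varphi(v)}$ over realizations with $\varphi(U_\tau)=I,\varphi(V_\tau)=J$ as ordered tuples. A shape is simple if $V(\tau)=U_\tau\cup V_\tau$ and every edge has both endpoints in $U_\tau$ or both endpoints in $V_\tau$. For $S\subseteq V(\tau)$, $E(S)$ is the set of edges with both endpoints in $S$. $\|\mathbf M\|_{2t}^{2t}=\operatorname{tr}((\mathbf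 M\mathbf M^\intercal)^t)$. *)

theory Defs
  imports "HOL-Probability.Probability"
begin

definition pairs_n :: "nat \<Rightarrow> nat set set" where
  "pairs_n n = {e. e \<subseteq> {..<n} \<and> card e = 2}"

text \<open>The p-biased random graph: an independent Bernoulli(p) bit for each pair.
  The bit True (probability p) means the entry -sqrt((1-p)/p), False (probability 1-p)
  means sqrt(p/(1-p)).\<close>
definition rg_pmf :: "nat \<Rightarrow> real \<Rightarrow> (nat set \<Rightarrow> bool) pmf" where
  "rg_pmf n p = Pi_pmf (pairs_n n) False (\<lambda>_. bernoulli_pmf p)"

definition Gval :: "real \<Rightarrow> (nat set \<Rightarrow> bool) \<Rightarrow> nat set \<Rightarrow> real" where
  "Gval p X e = (if X e then - sqrt ((1 - p) / p) else sqrt (p / (1 - p)))"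

text \<open>Shapes: vertex set (finite set of naturals), edge set (2-element subsets),
  and two ordered subsets U, V given as distinct lists.\<close>
record shape =
  sV :: "nat set"
  sE :: "nat set set"
  sU :: "nat list"
  sW :: "nat list"

definition is_shape :: "shape \<Rightarrow> bool" where
  "is_shape \<tau> \<longleftrightarrow> finite (sV \<tau>) \<and> (\<forall>e\<in>sE \<tau>. e \<subseteq> sV \<tau> \<and> card e = 2)
     \<and> distinct (sU \<tau>) \<and> distinct (sW \<tau>) \<and> set (sU \<tau>) \<subseteq> sV \<tau> \<and> set (sW \<tau>) \<subseteq> sV \<tau>"

definition simple_shape :: "shape \<Rightarrow> bool" where
  "simple_shape \<tau> \<longleftrightarrow> is_shape \<tau> \<and> sV \<tau> = set (sU \<tau>) \<union> set (sW \<tau>)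
     \<and> (\<forall>e\<in>sE \<tau>. e \<subseteq> set (sU \<tau>) \<or> e \<subseteq> set (sW \<tau>))"

definition edges_in :: "shape \<Rightarrow> nat set \<Rightarrow> nat set set" where
  "edges_in \<tau> S = {e \<in> sE \<tau>. e \<subseteq> S}"

definition tuples :: "nat \<Rightarrow> nat list set" where
  "tuples n = {xs. distinct xs \<and> set xs \<subseteq> {..<n}}"

definition realizations :: "nat \<Rightarrow> shape \<Rightarrow> (nat \<Rightarrow> nat) set" where
  "realizations n \<tau> = {\<phi> \<in> sV \<tau> \<rightarrow>\<^sub>E {..<n}. inj_on \<phi> (sV \<tau>)}"

definition graph_matrix :: "nat \<Rightarrow> shape \<Rightarrow> (nat set \<Rightarrow> real) \<Rightarrow> nat list \<Rightarrow> nat list \<Rightarrow> real" where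
  "graph_matrix n \<tau> G I J =
     (\<Sum>\<phi>\<in>{\<phi> \<in> realizations n \<tau>. map \<phi> (sU \<tau>) = I \<and> map \<phi> (sW \<tau>) = J}.
        \<Prod>e\<in>sE \<tau>. G (\<phi> ` e))"

definition mat_mult :: "'i set \<Rightarrow> ('i \<Rightarrow> 'i \<Rightarrow> real) \<Rightarrow> ('i \<Rightarrow> 'i \<Rightarrow> real) \<Rightarrow> 'i \<Rightarrow> 'i \<Rightarrow> real" where
  "mat_mult Idx A B i j = (\<Sum>k\<in>Idx. A i k * B k j)"

definition mat_transpose :: "('i \<Rightarrow> 'i \<Rightarrow> real) \<Rightarrow> 'i \<Rightarrow> 'i \<Rightarrow> real" where
  "mat_transpose A i j = A j i"

definition mat_id :: "'i \<Rightarrow> 'i \<Rightarrow> real" where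
  "mat_id i j = (if i = j then 1 else 0)"

fun mat_pow :: "'i set \<Rightarrow> ('i \<Rightarrow> 'i \<Rightarrow> real) \<Rightarrow> nat \<Rightarrow> 'i \<Rightarrow> 'i \<Rightarrow> real" where
  "mat_pow Idx A 0 = mat_id"
| "mat_pow Idx A (Suc k) = mat_mult Idx (mat_pow Idx A k) A"

definition mat_trace :: "'i set \<Rightarrow> ('i \<Rightarrow> 'i \<Rightarrow> real) \<Rightarrow> real" where
  "mat_trace Idx A = (\<Sum>i\<in>Idx. A i i)"

text \<open>Schatten norm power: ||M||_{2t}^{2t} = tr((M M^T)^t).\<close>
definition schatten_pow :: "'i set \<Rightarrow> ('i \<Rightarrow> 'i \<Rightarrow> real) \<Rightarrow> nat \<Rightarrow> real" where
  "schatten_pow Idx M t = mat_trace Idx (mat_pow Idx (mat_mult Idx M (mat_transpose M)) t)"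

end

theory Submission
  imports Defs
begin

text \<open>For a simple shape a pair of index tuples (I, J) determines at most one realization, and
  M M^T is block diagonal, the block of a row being given by the values the row puts on U \<inter> V.
  Bounding the trace of the t-th power of each block by the t-th power of its Frobenius norm gives
  ||M||_2t^2t \<le> \<Sum>_\<sigma> (\<Sum>_\<phi> w(\<phi>)^2)^t, where \<phi> ranges over the realizations that agree with \<sigma>
  on U \<inter> V. Since w(\<phi>)^2 \<le> q^k with q = (1-p)/p and k the number of edges sent to rare pairs,
  each inner sum is at most \<Sum>_F q^|F| N_F, where N_F counts the realizations sending all of F
  to rare pairs.

  The t-th moment of N_F is bounded by peeling off one realization at a time. Given the set Q of
  pairs already forced to be rare, a realization whose edges in H \<subseteq> F land in Q costs p^|F-H|,
  and such realizations are counted edge by edge: a vertex outside U \<inter> V and \<Union>H ranges over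
  [n], while the new endpoints of an edge of H must form a pair of Q, of which there are O(t|E|),
  each vertex lying in O(t|V|) of them. With S = (U \<inter> V) \<union> \<Union>H the factor q^|H| n^(|V|-|S|)
  is at most the maximum in the statement.\<close>

section \<open>Traces of powers of block-diagonal matrices\<close>

definition frobenius_sq :: "'i set \<Rightarrow> ('i \<Rightarrow> 'i \<Rightarrow> real) \<Rightarrow> real" where
  "frobenius_sq S A = (\<Sum>I\<in>S. \<Sum>J\<in>S. (A I J)^2)"

lemma frobenius_sq_nonneg: "0 \<le> frobenius_sq S A"
  by (auto simp: frobenius_sq_def intro!: sum_nonneg)

lemma frobenius_sq_mat_mult_le:
  "frobenius_sq S (mat_mult S A B) \<le> frobenius_sq S A * frobenius_sq S B"
proof -
  have "frobenius_sq S (mat_mult S A B)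
      \<le> (\<Sum>I\<in>S. \<Sum>J\<in>S. (\<Sum>K\<in>S. (A I K)^2) * (\<Sum>K\<in>S. (B K J)^2))"
    unfolding frobenius_sq_def mat_mult_def by (intro sum_mono Cauchy_Schwarz_ineq_sum)
  also have "\<dots> = frobenius_sq S A * (\<Sum>J\<in>S. \<Sum>K\<in>S. (B K J)^2)"
    by (simp add: frobenius_sq_def sum_product)
  also have "(\<Sum>J\<in>S. \<Sum>K\<in>S. (B K J)^2) = frobenius_sq S B"
    unfolding frobenius_sq_def by (rule sum.swap)
  finally show ?thesis .
qed

lemma frobenius_sq_mat_pow_le:
  assumes "finite S" "k \<ge> 1"
  shows "frobenius_sq S (mat_pow S B k) \<le> frobenius_sq S B ^ k"
  using assms(2)
proof (induction k rule: nat_induct_at_least)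
  case base
  have "mat_mult S mat_id B I J = B I J" if "I \<in> S" for I J
  proof -
    have "mat_mult S mat_id B I J = (\<Sum>K\<in>S. if I = K then B I J else 0)"
      unfolding mat_mult_def by (intro sum.cong) (auto simp: mat_id_def)
    then show ?thesis using assms(1) that by simp
  qed
  then show ?case by (simp add: frobenius_sq_def)
next
  case (Suc k)
  have "frobenius_sq S (mat_pow S B (Suc k)) \<le> frobenius_sq S (mat_pow S B k) * frobenius_sq S B"
    by (simp add: frobenius_sq_mat_mult_le)
  also have "\<dots> \<le> frobenius_sq S B ^ k * frobenius_sq S B"
    by (intro mult_right_mono Suc.IH frobenius_sq_nonneg)
  finally show ?case by (simp add: mult.commute)
qed

lemma trace_mat_mult_sq_le:
  "(mat_trace S (mat_mult S A B))^2 \<le> frobenius_sq S A * frobenius_sq S B"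
proof -
  have tr: "mat_trace S (mat_mult S A B) = (\<Sum>x\<in>S \<times> S. A (fst x) (snd x) * B (snd x) (fst x))"
    by (simp add: mat_trace_def mat_mult_def sum.cartesian_product case_prod_unfold)
  have fA: "(\<Sum>x\<in>S \<times> S. (A (fst x) (snd x))^2) = frobenius_sq S A"
    by (simp add: frobenius_sq_def sum.cartesian_product case_prod_unfold)
  have "(\<Sum>x\<in>S \<times> S. (B (snd x) (fst x))^2) = (\<Sum>I\<in>S. \<Sum>J\<in>S. (B J I)^2)"
    by (simp add: sum.cartesian_product case_prod_unfold)
  also have "\<dots> = frobenius_sq S B"
    unfolding frobenius_sq_def by (rule sum.swap)
  finally have fB: "(\<Sum>x\<in>S \<times> S. (B (snd x) (fst x))^2) = frobenius_sq S B" .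
  show ?thesis
    unfolding tr fA[symmetric] fB[symmetric] by (rule Cauchy_Schwarz_ineq_sum)
qed

lemma trace_mat_pow_le:
  assumes "finite S" "t \<ge> 2"
  shows "mat_trace S (mat_pow S B t) \<le> sqrt (frobenius_sq S B) ^ t"
proof -
  obtain s where t: "t = Suc s" and s: "s \<ge> 1" using assms(2) by (cases t) auto
  have "(mat_trace S (mat_pow S B t))^2 \<le> frobenius_sq S (mat_pow S B s) * frobenius_sq S B"
    unfolding t by (simp add: trace_mat_mult_sq_le)
  also have "\<dots> \<le> frobenius_sq S B ^ s * frobenius_sq S B"
    by (intro mult_right_mono frobenius_sq_mat_pow_le assms(1) s frobenius_sq_nonneg)
  also have "\<dots> = (sqrt (frobenius_sq S B) ^ 2) ^ t"
    by (simp add: t frobenius_sq_nonneg)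
  also have "\<dots> = (sqrt (frobenius_sq S B) ^ t)^2"
    by (simp only: power_mult[symmetric] mult.commute)
  finally show ?thesis
    by (rule power2_le_imp_le) (intro zero_le_power real_sqrt_ge_zero frobenius_sq_nonneg)
qed

lemma mat_pow_block_diagonal:
  fixes B :: "'i \<Rightarrow> 'i \<Rightarrow> real" and \<kappa> :: "'i \<Rightarrow> 'k"
  assumes fin: "finite Idx"
    and block: "\<And>I J. I \<in> Idx \<Longrightarrow> J \<in> Idx \<Longrightarrow> B I J \<noteq> 0 \<Longrightarrow> \<kappa> I = \<kappa> J"
    and J: "J \<in> Idx"
  shows "mat_pow Idx B k I J = mat_pow {K\<in>Idx. \<kappa> K = \<kappa> J} B k I J"
  using J
proof (induction k arbitrary: J)
  case (Suc k)
  let ?S = "{K\<in>Idx. \<kappa> K = \<kappa> J}"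
  have "mat_pow Idx B (Suc k) I J = (\<Sum>K\<in>?S. mat_pow Idx B k I K * B K J)"
    unfolding mat_pow.simps mat_mult_def
  proof (rule sum.mono_neutral_right[OF fin])
    show "\<forall>K\<in>Idx - ?S. mat_pow Idx B k I K * B K J = 0"
      using block Suc.prems by fastforce
  qed auto
  also have "\<dots> = (\<Sum>K\<in>?S. mat_pow ?S B k I K * B K J)"
    by (intro sum.cong refl) (use Suc.IH in auto)
  finally show ?case by (simp add: mat_mult_def)
qed simp

lemma trace_mat_pow_block_diagonal_le:
  fixes B :: "'i \<Rightarrow> 'i \<Rightarrow> real" and \<kappa> :: "'i \<Rightarrow> 'k"
  assumes fin: "finite Idx"
    and block: "\<And>I J. I \<in> Idx \<Longrightarrow> J \<in> Idx \<Longrightarrow> B I J \<noteq> 0 \<Longrightarrow> \<kappa> I = \<kappa> J"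
    and t: "t \<ge> 2"
  shows "mat_trace Idx (mat_pow Idx B t)
    \<le> (\<Sum>\<sigma>\<in>\<kappa> ` Idx. sqrt (frobenius_sq {I\<in>Idx. \<kappa> I = \<sigma>} B) ^ t)"
proof -
  have "mat_trace Idx (mat_pow Idx B t) = (\<Sum>\<sigma>\<in>\<kappa> ` Idx. \<Sum>I\<in>{I\<in>Idx. \<kappa> I = \<sigma>}. mat_pow Idx B t I I)"
    unfolding mat_trace_def by (rule sum.group[symmetric]) (use fin in auto)
  also have "\<dots> = (\<Sum>\<sigma>\<in>\<kappa> ` Idx. mat_trace {I\<in>Idx. \<kappa> I = \<sigma>} (mat_pow {I\<in>Idx. \<kappa> I = \<sigma>} B t))"
    unfolding mat_trace_def
    by (intro sum.cong refl) (auto simp: mat_pow_block_diagonal[OF fin block])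
  also have "\<dots> \<le> (\<Sum>\<sigma>\<in>\<kappa> ` Idx. sqrt (frobenius_sq {I\<in>Idx. \<kappa> I = \<sigma>} B) ^ t)"
    by (intro sum_mono trace_mat_pow_le t) (use fin in auto)
  finally show ?thesis .
qed

lemma sqrt_frobenius_sq_gram_le:
  "sqrt (frobenius_sq S (mat_mult Idx M (mat_transpose M))) \<le> (\<Sum>I\<in>S. \<Sum>J\<in>Idx. (M I J)^2)"
proof -
  define r where "r I = (\<Sum>J\<in>Idx. (M I J)^2)" for I
  have "frobenius_sq S (mat_mult Idx M (mat_transpose M)) \<le> (\<Sum>I\<in>S. \<Sum>I'\<in>S. r I * r I')"
    unfolding frobenius_sq_def mat_mult_def mat_transpose_def r_def
    by (intro sum_mono Cauchy_Schwarz_ineq_sum)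
  also have "\<dots> = (\<Sum>I\<in>S. r I)^2"
    by (simp add: power2_eq_square sum_product)
  finally have "sqrt (frobenius_sq S (mat_mult Idx M (mat_transpose M))) \<le> \<bar>\<Sum>I\<in>S. r I\<bar>"
    using real_sqrt_le_mono by fastforce
  also have "\<dots> = (\<Sum>I\<in>S. r I)"
    by (rule abs_of_nonneg) (auto simp: r_def intro!: sum_nonneg)
  finally show ?thesis unfolding r_def .
qed

section \<open>Graph matrices of simple shapes\<close>

lemma finite_tuples: "finite (tuples n)"
proof -
  have "tuples n \<subseteq> {xs. set xs \<subseteq> {..<n} \<and> length xs \<le> n}"
  proof
    fix xs assume "xs \<in> tuples n"
    then have "distinct xs" and s: "set xs \<subseteq> {..<n}" by (auto simp: tuples_def)
    then have "length xs \<le> card {..<n}" by (metis card_mono distinct_card finite_lessThan)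
    then show "xs \<in> {xs. set xs \<subseteq> {..<n} \<and> length xs \<le> n}" using s by simp
  qed
  then show ?thesis using finite_lists_length_le[of "{..<n}" n] finite_subset by auto
qed

lemma finite_realizations: "finite (sV \<tau>) \<Longrightarrow> finite (realizations n \<tau>)"
  unfolding realizations_def by (rule finite_subset[of _ "sV \<tau> \<rightarrow>\<^sub>E {..<n}"]) (auto intro: finite_PiE)

lemma card_realizations_le: "finite (sV \<tau>) \<Longrightarrow> card (realizations n \<tau>) \<le> n ^ card (sV \<tau>)"
proof -
  assume fin: "finite (sV \<tau>)"
  have "card (realizations n \<tau>) \<le> card (sV \<tau> \<rightarrow>\<^sub>E {..<n})"
    unfolding realizations_def by (rule card_mono) (use fin in \<open>auto intro: finite_PiE\<close>)
  also have "\<dots> = n ^ card (sV \<tau>)" using fin by (simp add: card_PiE prod_constant)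
  finally show ?thesis .
qed

locale simple_graph_shape =
  fixes n :: nat and \<tau> :: shape
  assumes simple: "simple_shape \<tau>"
begin

abbreviation "V \<equiv> sV \<tau>"
abbreviation "E \<equiv> sE \<tau>"
abbreviation "Z \<equiv> set (sU \<tau>) \<inter> set (sW \<tau>)"
abbreviation "R \<equiv> realizations n \<tau>"

lemma is_shape: "is_shape \<tau>"
  using simple by (simp add: simple_shape_def)

lemma V_eq: "V = set (sU \<tau>) \<union> set (sW \<tau>)"
  using simple by (simp add: simple_shape_def)

lemma finite_V: "finite V"
  using is_shape by (simp add: is_shape_def)

lemma edgeD: "e \<in> E \<Longrightarrow> card e = 2 \<and> e \<subseteq> V"
  using is_shape unfolding is_shape_def by blast

lemma finite_E: "finite E"
proof (rule finite_subset)
  show "E \<subseteq> Pow V" using edgeD by blast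
qed (simp add: finite_V)

lemma Z_subset_V: "Z \<subseteq> V"
  using V_eq by blast

lemma realizationD: "\<phi> \<in> R \<Longrightarrow> inj_on \<phi> V \<and> \<phi> \<in> V \<rightarrow>\<^sub>E {..<n}"
  by (simp add: realizations_def)

lemma map_realization_tuples:
  assumes "\<phi> \<in> R" "L = sU \<tau> \<or> L = sW \<tau>"
  shows "map \<phi> L \<in> tuples n"
  using assms is_shape V_eq unfolding realizations_def tuples_def is_shape_def
  by (auto simp: distinct_map intro: inj_on_subset)

lemma realization_eqI:
  assumes "\<phi> \<in> R" "\<psi> \<in> R" "map \<phi> (sU \<tau>) = map \<psi> (sU \<tau>)" "map \<phi> (sW \<tau>) = map \<psi> (sW \<tau>)"
  shows "\<phi> = \<psi>"
proof
  fix x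
  show "\<phi> x = \<psi> x"
  proof (cases "x \<in> V")
    case True
    then show ?thesis using assms(3,4) V_eq by (auto simp: map_eq_conv)
  next
    case False
    then show ?thesis using assms(1,2) by (auto simp: realizations_def PiE_def extensional_def)
  qed
qed

definition weight :: "(nat set \<Rightarrow> real) \<Rightarrow> (nat \<Rightarrow> nat) \<Rightarrow> real" where
  "weight G \<phi> = (\<Prod>e\<in>E. G (\<phi> ` e))"

definition key_class :: "(nat \<Rightarrow> nat) \<Rightarrow> (nat \<Rightarrow> nat) set" where
  "key_class \<sigma> = {\<phi>\<in>R. restrict \<phi> Z = \<sigma>}"

lemma finite_key_class: "finite (key_class \<sigma>)"
  unfolding key_class_def using finite_realizations[OF finite_V] by simp

text \<open>The values that a row index \<open>I\<close> puts on \<open>U \<inter> V\<close>, read off positionally through \<open>U\<close>.\<close>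

definition row_key :: "nat list \<Rightarrow> nat \<Rightarrow> nat" where
  "row_key I = restrict (the \<circ> map_of (zip (sU \<tau>) I)) Z"

lemma row_key_map: "row_key (map \<phi> (sU \<tau>)) = restrict \<phi> Z"
  by (auto simp: row_key_def map_of_zip_map)

lemma graph_matrix_nonzeroD:
  "graph_matrix n \<tau> G I J \<noteq> 0 \<Longrightarrow> \<exists>\<phi>\<in>R. map \<phi> (sU \<tau>) = I \<and> map \<phi> (sW \<tau>) = J"
  unfolding graph_matrix_def by (metis (mono_tags, lifting) empty_Collect_eq sum.empty)

lemma gram_block_diagonal:
  assumes "mat_mult Idx (graph_matrix n \<tau> G) (mat_transpose (graph_matrix n \<tau> G)) I I' \<noteq> 0"
  shows "row_key I = row_key I'"
proof -
  obtain J where "graph_matrix n \<tau> G I J * graph_matrix n \<tau> G I' J \<noteq> 0"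
    using assms unfolding mat_mult_def mat_transpose_def by (meson sum.neutral)
  then have "graph_matrix n \<tau> G I J \<noteq> 0" "graph_matrix n \<tau> G I' J \<noteq> 0" by auto
  then obtain \<phi> \<psi> where "\<phi> \<in> R" "map \<phi> (sU \<tau>) = I" "map \<phi> (sW \<tau>) = J"
    and "\<psi> \<in> R" "map \<psi> (sU \<tau>) = I'" "map \<psi> (sW \<tau>) = J"
    using graph_matrix_nonzeroD by metis
  moreover have "restrict \<phi> Z = restrict \<psi> Z"
    using \<open>map \<phi> (sW \<tau>) = J\<close> \<open>map \<psi> (sW \<tau>) = J\<close> by (auto simp: map_eq_conv)
  ultimately show ?thesis using row_key_map[of \<phi>] row_key_map[of \<psi>] by simp
qed

lemma graph_matrix_sq:
  "(graph_matrix n \<tau> G I J)^2 = (\<Sum>\<phi>\<in>{\<phi>\<in>R. map \<phi> (sU \<tau>) = I \<and> map \<phi> (sW \<tau>) = J}. (weight G \<phi>)^2)"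
proof (cases "{\<phi>\<in>R. map \<phi> (sU \<tau>) = I \<and> map \<phi> (sW \<tau>) = J} = {}")
  case True
  then show ?thesis unfolding graph_matrix_def weight_def by (simp only: sum.empty) simp
next
  case False
  then obtain \<phi> where "\<phi> \<in> R" "map \<phi> (sU \<tau>) = I" "map \<phi> (sW \<tau>) = J" by auto
  then have "{\<phi>\<in>R. map \<phi> (sU \<tau>) = I \<and> map \<phi> (sW \<tau>) = J} = {\<phi>}"
    using realization_eqI by blast
  then show ?thesis by (simp add: graph_matrix_def weight_def)
qed

lemma row_block_mass:
  "(\<Sum>I\<in>{I\<in>tuples n. row_key I = \<sigma>}. \<Sum>J\<in>tuples n. (graph_matrix n \<tau> G I J)^2)
    = (\<Sum>\<phi>\<in>key_class \<sigma>. (weight G \<phi>)^2)"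
proof -
  let ?Is = "{I\<in>tuples n. row_key I = \<sigma>}"
  let ?S = "{\<phi>\<in>R. restrict \<phi> Z = \<sigma>}"
  let ?g = "\<lambda>\<phi>. (map \<phi> (sU \<tau>), map \<phi> (sW \<tau>))"
  have fin: "finite ?S" "finite (?Is \<times> tuples n)"
    using finite_realizations[OF finite_V] finite_tuples by auto
  have g: "?g ` ?S \<subseteq> ?Is \<times> tuples n"
    using map_realization_tuples row_key_map by auto
  have "(\<Sum>I\<in>?Is. \<Sum>J\<in>tuples n. (graph_matrix n \<tau> G I J)^2)
      = (\<Sum>x\<in>?Is \<times> tuples n. (graph_matrix n \<tau> G (fst x) (snd x))^2)"
    by (simp add: sum.cartesian_product case_prod_unfold)
  also have "\<dots> = (\<Sum>x\<in>?Is \<times> tuples n. \<Sum>\<phi>\<in>{\<phi>\<in>?S. ?g \<phi> = x}. (weight G \<phi>)^2)"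
  proof (intro sum.cong refl)
    fix x assume "x \<in> ?Is \<times> tuples n"
    then have "{\<phi>\<in>R. map \<phi> (sU \<tau>) = fst x \<and> map \<phi> (sW \<tau>) = snd x} = {\<phi>\<in>?S. ?g \<phi> = x}"
      by (auto simp: prod_eq_iff row_key_map[symmetric])
    then show "(graph_matrix n \<tau> G (fst x) (snd x))^2 = (\<Sum>\<phi>\<in>{\<phi>\<in>?S. ?g \<phi> = x}. (weight G \<phi>)^2)"
      by (simp add: graph_matrix_sq)
  qed
  also have "\<dots> = (\<Sum>\<phi>\<in>?S. (weight G \<phi>)^2)"
    by (rule sum.group[OF fin g])
  finally show ?thesis by (simp add: key_class_def)
qed

lemma schatten_pow_le_key_blocks:
  assumes t: "t \<ge> 2"
  shows "schatten_pow (tuples n) (graph_matrix n \<tau> G) t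
    \<le> (\<Sum>\<sigma>\<in>(\<lambda>\<phi>. restrict \<phi> Z) ` R. (\<Sum>\<phi>\<in>key_class \<sigma>. (weight G \<phi>)^2) ^ t)"
proof -
  let ?M = "graph_matrix n \<tau> G"
  let ?B = "mat_mult (tuples n) ?M (mat_transpose ?M)"
  let ?mass = "\<lambda>\<sigma>. \<Sum>\<phi>\<in>key_class \<sigma>. (weight G \<phi>)^2"
  have "schatten_pow (tuples n) ?M t
      \<le> (\<Sum>\<sigma>\<in>row_key ` tuples n. sqrt (frobenius_sq {I\<in>tuples n. row_key I = \<sigma>} ?B) ^ t)"
    unfolding schatten_pow_def
    by (rule trace_mat_pow_block_diagonal_le[OF finite_tuples gram_block_diagonal t])
  also have "\<dots> \<le> (\<Sum>\<sigma>\<in>row_key ` tuples n. ?mass \<sigma> ^ t)"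
    by (intro sum_mono power_mono real_sqrt_ge_zero frobenius_sq_nonneg)
       (simp add: sqrt_frobenius_sq_gram_le flip: row_block_mass)
  also have "\<dots> = (\<Sum>\<sigma>\<in>(\<lambda>\<phi>. restrict \<phi> Z) ` R. ?mass \<sigma> ^ t)"
  proof (rule sum.mono_neutral_right)
    show "finite (row_key ` tuples n)" using finite_tuples by simp
    show "(\<lambda>\<phi>. restrict \<phi> Z) ` R \<subseteq> row_key ` tuples n"
    proof (rule image_subsetI)
      fix \<phi> assume "\<phi> \<in> R"
      then show "restrict \<phi> Z \<in> row_key ` tuples n"
        by (intro image_eqI[of _ _ "map \<phi> (sU \<tau>)"]) (auto simp: row_key_map map_realization_tuples)
    qed
    show "\<forall>\<sigma>\<in>row_key ` tuples n - (\<lambda>\<phi>. restrict \<phi> Z) ` R. ?mass \<sigma> ^ t = 0"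
    proof
      fix \<sigma> assume "\<sigma> \<in> row_key ` tuples n - (\<lambda>\<phi>. restrict \<phi> Z) ` R"
      then have "key_class \<sigma> = {}" unfolding key_class_def by blast
      then show "?mass \<sigma> ^ t = 0" using t by (simp only: sum.empty) simp
    qed
  qed
  finally show ?thesis .
qed

end

section \<open>Counting partial homomorphisms into a sparse set of pairs\<close>

lemma card_neighbours_le:
  assumes "finite Q" "\<forall>f\<in>Q. card f = 2" "card {f\<in>Q. c \<in> f} \<le> D"
  shows "finite {y. {c, y} \<in> Q} \<and> card {y. {c, y} \<in> Q} \<le> D"
proof -
  have inj: "inj_on (\<lambda>y. {c, y}) {y. {c, y} \<in> Q}"
  proof (rule inj_onI)
    fix y y' assume "y \<in> {y. {c, y} \<in> Q}" and eq: "{c, y} = {c, y'}"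
    then have "y \<noteq> c" using assms(2) by (force simp: card_insert_if)
    then show "y = y'" using eq by (metis doubleton_eq_iff)
  qed
  have sub: "(\<lambda>y. {c, y}) ` {y. {c, y} \<in> Q} \<subseteq> {f\<in>Q. c \<in> f}" by auto
  have fin: "finite {f\<in>Q. c \<in> f}" using assms(1) by auto
  show ?thesis
    using finite_imageD[OF finite_subset[OF sub fin] inj] card_mono[OF fin sub] card_image[OF inj] assms(3)
    by linarith
qed

lemma card_ordered_pairs_le:
  assumes "finite Q" "\<forall>f\<in>Q. card f = 2"
  shows "finite {(x, y). {x, y} \<in> Q} \<and> card {(x, y). {x, y} \<in> Q} \<le> 4 * card Q"
proof -
  have sub: "{(x, y). {x, y} \<in> Q} \<subseteq> (\<Union>f\<in>Q. f \<times> f)" by auto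
  have "finite f" if "f \<in> Q" for f using assms(2) that card.infinite by fastforce
  then have fin: "finite (\<Union>f\<in>Q. f \<times> f)" using assms(1) by auto
  have "card (\<Union>f\<in>Q. f \<times> f) \<le> (\<Sum>f\<in>Q. card (f \<times> f))" by (rule card_UN_le[OF assms(1)])
  also have "\<dots> = 4 * card Q" using assms(2) by (simp add: card_cartesian_product)
  finally show ?thesis using finite_subset[OF sub fin] card_mono[OF fin sub] by linarith
qed

lemma card_edge_extensions_le:
  fixes Q :: "nat set set" and e :: "'a set" and T W :: real
  assumes Q: "finite Q" "\<forall>f\<in>Q. card f = 2" "card Q \<le> L" "\<forall>x. card {f\<in>Q. x \<in> f} \<le> D"
    and DL: "real D \<le> T * W" "real L \<le> T * W^2" "T \<ge> 1" "W \<ge> 0"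
    and e: "card e = 2" and N: "N \<subseteq> e"
  shows "real (card {\<xi> \<in> N \<rightarrow>\<^sub>E {..<n}. override_on g \<xi> N ` e \<in> Q}) \<le> 4 * T * W ^ card N"
proof -
  let ?Ext = "{\<xi> \<in> N \<rightarrow>\<^sub>E {..<n}. override_on g \<xi> N ` e \<in> Q}"
  obtain a b where ab: "e = {a, b}" "a \<noteq> b" using e by (auto simp: card_2_iff)
  consider "N = {}" | c c' where "N = {c}" "e = {c', c}" "c \<noteq> c'" | "N = e"
    using N ab by blast
  then show ?thesis
  proof cases
    case 1
    have "card ?Ext \<le> card (N \<rightarrow>\<^sub>E {..<n})" by (rule card_mono) (auto simp: 1)
    then show ?thesis using 1 DL by simp
  next
    case 2
    have inj: "inj_on (\<lambda>\<xi>. \<xi> c) ?Ext"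
    proof (rule inj_onI, rule ext)
      fix \<xi> \<xi>' x assume "\<xi> \<in> ?Ext" "\<xi>' \<in> ?Ext" "\<xi> c = \<xi>' c"
      then show "\<xi> x = \<xi>' x" using 2 by (cases "x = c") (auto simp: PiE_def extensional_def)
    qed
    have img: "(\<lambda>\<xi>. \<xi> c) ` ?Ext \<subseteq> {y. {g c', y} \<in> Q}"
      using 2 by auto
    note nbrs = card_neighbours_le[OF Q(1,2) Q(4)[rule_format]]
    have "card ?Ext \<le> card {y. {g c', y} \<in> Q}"
      using card_inj_on_le[OF inj img] nbrs by blast
    also have "\<dots> \<le> D" using nbrs by blast
    finally have "real (card ?Ext) \<le> T * W" using DL(1) by linarith
    then show ?thesis using 2 DL by simp
  next
    case 3
    have inj: "inj_on (\<lambda>\<xi>. (\<xi> a, \<xi> b)) ?Ext"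
    proof (rule inj_onI, rule ext)
      fix \<xi> \<xi>' x assume "\<xi> \<in> ?Ext" "\<xi>' \<in> ?Ext" "(\<xi> a, \<xi> b) = (\<xi>' a, \<xi>' b)"
      then show "\<xi> x = \<xi>' x" using 3 ab by (cases "x \<in> e") (auto simp: PiE_def extensional_def)
    qed
    have img: "(\<lambda>\<xi>. (\<xi> a, \<xi> b)) ` ?Ext \<subseteq> {(x, y). {x, y} \<in> Q}"
      using 3 ab by auto
    note pairs = card_ordered_pairs_le[OF Q(1,2)]
    have "card ?Ext \<le> card {(x, y). {x, y} \<in> Q}"
      using card_inj_on_le[OF inj img] pairs by blast
    also have "\<dots> \<le> 4 * L" using pairs Q(3) by linarith
    finally have "real (card ?Ext) \<le> 4 * (T * W^2)" using DL(2) by linarith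
    then show ?thesis using 3 e by simp
  qed
qed

definition hom_extensions :: "nat \<Rightarrow> ('a \<Rightarrow> nat) \<Rightarrow> nat set set \<Rightarrow> 'a set \<Rightarrow> 'a set set \<Rightarrow> ('a \<Rightarrow> nat) set" where
  "hom_extensions n g Q A H = {\<psi> \<in> A \<rightarrow>\<^sub>E {..<n}. \<forall>e\<in>H. override_on g \<psi> A ` e \<in> Q}"

lemma finite_hom_extensions: "finite A \<Longrightarrow> finite (hom_extensions n g Q A H)"
  unfolding hom_extensions_def by (rule finite_subset[of _ "A \<rightarrow>\<^sub>E {..<n}"]) (auto intro: finite_PiE)

lemma hom_extensions_insert_subset:
  assumes N: "N = A \<inter> e - \<Union>H"
  shows "hom_extensions n g Q A (insert e H)
    \<subseteq> (\<lambda>(\<psi>', \<xi>). override_on \<psi>' \<xi> N) `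
        (SIGMA \<psi>':hom_extensions n g Q (A - N) H.
           {\<xi> \<in> N \<rightarrow>\<^sub>E {..<n}. override_on (override_on g \<psi>' (A - N)) \<xi> N ` e \<in> Q})"
proof
  fix \<psi> assume \<psi>: "\<psi> \<in> hom_extensions n g Q A (insert e H)"
  have split: "override_on (override_on g (restrict \<psi> (A - N)) (A - N)) (restrict \<psi> N) N = override_on g \<psi> A"
    by (auto simp: override_on_def N fun_eq_iff)
  have "override_on g (restrict \<psi> (A - N)) (A - N) ` e' = override_on g \<psi> A ` e'" if "e' \<in> H" for e'
    using that by (auto simp: override_on_def N)
  then have "restrict \<psi> (A - N) \<in> hom_extensions n g Q (A - N) H"
    using \<psi> by (auto simp: hom_extensions_def)
  moreover have "restrict \<psi> N \<in> N \<rightarrow>\<^sub>E {..<n}"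
    using \<psi> by (auto simp: hom_extensions_def N)
  moreover have "\<psi> = override_on (restrict \<psi> (A - N)) (restrict \<psi> N) N"
    using \<psi> by (auto simp: override_on_def N fun_eq_iff hom_extensions_def PiE_def extensional_def)
  ultimately show "\<psi> \<in> (\<lambda>(\<psi>', \<xi>). override_on \<psi>' \<xi> N) `
      (SIGMA \<psi>':hom_extensions n g Q (A - N) H.
         {\<xi> \<in> N \<rightarrow>\<^sub>E {..<n}. override_on (override_on g \<psi>' (A - N)) \<xi> N ` e \<in> Q})"
    using \<psi> split by (intro image_eqI[of _ _ "(restrict \<psi> (A - N), restrict \<psi> N)"]) (auto simp: hom_extensions_def)
qed

lemma card_hom_extensions_le:
  fixes Q :: "nat set set" and H :: "'a set set" and T W :: real
  assumes H: "finite H" "\<forall>e\<in>H. card e = 2"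
    and Q: "finite Q" "\<forall>f\<in>Q. card f = 2" "card Q \<le> L" "\<forall>x. card {f\<in>Q. x \<in> f} \<le> D"
    and DL: "real D \<le> T * W" "real L \<le> T * W^2" "T \<ge> 1" "W \<ge> 0"
    and A: "finite A"
  shows "real (card (hom_extensions n g Q A H))
    \<le> real n ^ card (A - \<Union>H) * (4 * T) ^ card H * W ^ card (A \<inter> \<Union>H)"
  using H A
proof (induction H arbitrary: A rule: finite_induct)
  case empty
  have "hom_extensions n g Q A {} = A \<rightarrow>\<^sub>E {..<n}" by (simp add: hom_extensions_def)
  then show ?case using empty.prems by (simp add: card_PiE prod_constant)
next
  case (insert e H A)
  \<comment> \<open>Only the vertices \<open>N\<close> of the new edge that are not yet constrained by \<open>H\<close> get new values.\<close>
  define N where "N = A \<inter> e - \<Union>H"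
  define Ext where "Ext \<psi>' = {\<xi> \<in> N \<rightarrow>\<^sub>E {..<n}. override_on (override_on g \<psi>' (A - N)) \<xi> N ` e \<in> Q}" for \<psi>'
  let ?Sigma = "Sigma (hom_extensions n g Q (A - N) H) Ext"
  have e: "card e = 2" and H2: "\<forall>e\<in>H. card e = 2" using insert.prems by auto
  have fin: "finite (A - N)" "finite N" using insert.prems by (auto simp: N_def)
  have finExt: "finite (Ext \<psi>')" for \<psi>'
    unfolding Ext_def by (rule finite_subset[of _ "N \<rightarrow>\<^sub>E {..<n}"]) (auto intro: finite_PiE fin)
  have finSigma: "finite ?Sigma"
    using finite_hom_extensions[OF fin(1)] finExt by auto
  have sub: "hom_extensions n g Q A (insert e H) \<subseteq> (\<lambda>(\<psi>', \<xi>). override_on \<psi>' \<xi> N) ` ?Sigma"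
    unfolding Ext_def by (rule hom_extensions_insert_subset[OF N_def])
  have "card (hom_extensions n g Q A (insert e H)) \<le> card ?Sigma"
    by (rule order_trans[OF card_mono[OF finite_imageI[OF finSigma] sub] card_image_le[OF finSigma]])
  also have "\<dots> = (\<Sum>\<psi>'\<in>hom_extensions n g Q (A - N) H. card (Ext \<psi>'))"
    using finite_hom_extensions[OF fin(1)] finExt by (simp add: card_SigmaI)
  finally have "real (card (hom_extensions n g Q A (insert e H)))
      \<le> (\<Sum>\<psi>'\<in>hom_extensions n g Q (A - N) H. real (card (Ext \<psi>')))"
    by (metis of_nat_le_iff of_nat_sum)
  also have "\<dots> \<le> (\<Sum>\<psi>'\<in>hom_extensions n g Q (A - N) H. 4 * T * W ^ card N)"
    unfolding Ext_def
    by (intro sum_mono card_edge_extensions_le[OF Q DL e]) (auto simp: N_def)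
  also have "\<dots> = real (card (hom_extensions n g Q (A - N) H)) * (4 * T * W ^ card N)"
    by simp
  also have "\<dots> \<le> real n ^ card (A - N - \<Union>H) * (4 * T) ^ card H * W ^ card ((A - N) \<inter> \<Union>H) * (4 * T * W ^ card N)"
    using DL by (intro mult_right_mono insert.IH[OF H2 fin(1)]) auto
  also have "\<dots> = real n ^ card (A - \<Union>(insert e H)) * (4 * T) ^ card (insert e H) * W ^ card (A \<inter> \<Union>(insert e H))"
  proof -
    have "A - N - \<Union>H = A - \<Union>(insert e H)" by (auto simp: N_def)
    moreover have "A \<inter> \<Union>(insert e H) = ((A - N) \<inter> \<Union>H) \<union> N" "((A - N) \<inter> \<Union>H) \<inter> N = {}"
      by (auto simp: N_def)
    ultimately show ?thesis
      using insert.hyps fin by (simp add: card_Un_disjoint power_add algebra_simps)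
  qed
  finally show ?case .
qed

section \<open>Moments of counts in the \<open>p\<close>-biased random graph\<close>

lemma finite_pairs_n: "finite (pairs_n n)"
  unfolding pairs_n_def by (rule finite_subset[of _ "Pow {..<n}"]) auto

lemma finite_set_rg_pmf: "finite (set_pmf (rg_pmf n p))"
proof -
  have "set_pmf (rg_pmf n p) = PiE_dflt (pairs_n n) False (set_pmf \<circ> (\<lambda>_. bernoulli_pmf p))"
    unfolding rg_pmf_def by (rule set_Pi_pmf[OF finite_pairs_n])
  also have "finite \<dots>" by (intro finite_PiE_dflt finite_pairs_n) auto
  finally show ?thesis .
qed

lemma integrable_rg_pmf: "integrable (measure_pmf (rg_pmf n p)) (f :: _ \<Rightarrow> real)"
  by (rule integrable_measure_pmf_finite[OF finite_set_rg_pmf])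

lemma prod_of_bool: "finite Q \<Longrightarrow> (\<Prod>f\<in>Q. (of_bool (X f) :: real)) = of_bool (\<forall>f\<in>Q. X f)"
  by (induction Q rule: finite_induct) auto

lemma expectation_all_true:
  assumes "Q \<subseteq> pairs_n n" "0 \<le> p" "p \<le> 1"
  shows "measure_pmf.expectation (rg_pmf n p) (\<lambda>X. of_bool (\<forall>f\<in>Q. X f)) = p ^ card Q"
proof -
  have finQ: "finite Q" using assms(1) finite_pairs_n finite_subset by blast
  have eq: "(of_bool (\<forall>f\<in>Q. X f) :: real) = (\<Prod>f\<in>pairs_n n. if f \<in> Q then of_bool (X f) else 1)" for X
  proof -
    have "(\<Prod>f\<in>pairs_n n. (if f \<in> Q then of_bool (X f) else 1) :: real) = (\<Prod>f\<in>pairs_n n \<inter> {f. f \<in> Q}. of_bool (X f))"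
      by (subst prod.If_cases[OF finite_pairs_n]) simp
    also have "pairs_n n \<inter> {f. f \<in> Q} = Q" using assms(1) by auto
    finally show ?thesis using prod_of_bool[OF finQ] by simp
  qed
  have "measure_pmf.expectation (rg_pmf n p) (\<lambda>X. (of_bool (\<forall>f\<in>Q. X f) :: real))
      = measure_pmf.expectation (Pi_pmf (pairs_n n) False (\<lambda>_. bernoulli_pmf p)) (\<lambda>X. \<Prod>f\<in>pairs_n n. (\<lambda>f b. if f \<in> Q then of_bool b else 1) f (X f))"
    unfolding rg_pmf_def by (simp only: eq)
  also have "\<dots> = (\<Prod>f\<in>pairs_n n. measure_pmf.expectation (bernoulli_pmf p) (\<lambda>b. (if f \<in> Q then of_bool b else 1)))"
    by (rule expectation_prod_Pi_pmf[OF finite_pairs_n])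
       (auto intro: integrable_measure_pmf_finite)
  also have "\<dots> = (\<Prod>f\<in>pairs_n n. (if f \<in> Q then p else 1))"
    using assms(2,3) by (intro prod.cong refl) auto
  also have "\<dots> = p ^ card Q"
    using assms(1) by (subst prod.If_cases[OF finite_pairs_n]) (simp add: Int_absorb1 inf.absorb2)
  finally show ?thesis .
qed

text \<open>The invariant of a union of \<open>j\<close> edge images of realizations of a shape with \<open>m\<close> edges
  and \<open>v\<close> vertices.\<close>

definition bounded_pairs :: "nat \<Rightarrow> nat \<Rightarrow> nat \<Rightarrow> nat \<Rightarrow> nat set set \<Rightarrow> bool" where
  "bounded_pairs n m v j Q \<longleftrightarrow> finite Q \<and> Q \<subseteq> pairs_n n \<and> card Q \<le> j * m \<and> (\<forall>x. card {f\<in>Q. x \<in> f} \<le> j * v)"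

lemma bounded_pairs_Un:
  assumes "bounded_pairs n m v j Q" "bounded_pairs n m v k Q'"
  shows "bounded_pairs n m v (j + k) (Q \<union> Q')"
proof -
  have "card (Q \<union> Q') \<le> card Q + card Q'" by (rule card_Un_le)
  also have "\<dots> \<le> (j + k) * m" using assms unfolding bounded_pairs_def by (simp add: add_mult_distrib)
  finally have card: "card (Q \<union> Q') \<le> (j + k) * m" .
  have degree: "card {f\<in>Q \<union> Q'. x \<in> f} \<le> (j + k) * v" for x
  proof -
    have "{f\<in>Q \<union> Q'. x \<in> f} = {f\<in>Q. x \<in> f} \<union> {f\<in>Q'. x \<in> f}" by auto
    then have "card {f\<in>Q \<union> Q'. x \<in> f} \<le> card {f\<in>Q. x \<in> f} + card {f\<in>Q'. x \<in> f}"
      by (simp add: card_Un_le)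
    also have "\<dots> \<le> (j + k) * v"
      using assms unfolding bounded_pairs_def by (simp add: add_mult_distrib add_mono)
    finally show ?thesis .
  qed
  show ?thesis using assms card degree unfolding bounded_pairs_def by auto
qed

lemma count_times_indicator:
  assumes "finite Rs"
  shows "real (card {\<phi>\<in>Rs. \<forall>e\<in>F. X (\<phi> ` e)}) * of_bool (\<forall>f\<in>Q. X f)
    = (\<Sum>\<phi>\<in>Rs. of_bool (\<forall>f\<in>Q \<union> (\<lambda>e. \<phi> ` e) ` F. X f))"
proof -
  have "real (card {\<phi>\<in>Rs. \<forall>e\<in>F. X (\<phi> ` e)}) = (\<Sum>\<phi>\<in>Rs. of_bool (\<forall>e\<in>F. X (\<phi> ` e)))"
    using assms by (simp add: Int_def conj_commute)
  then have "real (card {\<phi>\<in>Rs. \<forall>e\<in>F. X (\<phi> ` e)}) * of_bool (\<forall>f\<in>Q. X f)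
      = (\<Sum>\<phi>\<in>Rs. of_bool (\<forall>e\<in>F. X (\<phi> ` e)) * of_bool (\<forall>f\<in>Q. X f))"
    by (simp add: sum_distrib_right)
  also have "\<dots> = (\<Sum>\<phi>\<in>Rs. of_bool (\<forall>f\<in>Q \<union> (\<lambda>e. \<phi> ` e) ` F. X f))"
    by (intro sum.cong refl) auto
  finally show ?thesis .
qed

text \<open>Multiplying out one factor of the count adds the edge image of one realization to the
  forced pairs \<open>Q\<close>; \<open>j\<close> is the number of images \<open>Q\<close> already consists of.\<close>

lemma moment_count_times_indicator_le:
  fixes Rs :: "('a \<Rightarrow> nat) set" and F :: "'a set set" and B p :: real
  assumes finRs: "finite Rs"
    and img: "\<And>\<phi>. \<phi> \<in> Rs \<Longrightarrow> bounded_pairs n m v 1 ((\<lambda>e. \<phi> ` e) ` F)"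
    and step: "\<And>Q. bounded_pairs n m v t Q \<Longrightarrow> (\<Sum>\<phi>\<in>Rs. p ^ card ((\<lambda>e. \<phi> ` e) ` F - Q)) \<le> B"
    and p: "0 \<le> p" "p \<le> 1"
  shows "j + k \<le> t \<Longrightarrow> bounded_pairs n m v j Q \<Longrightarrow>
    measure_pmf.expectation (rg_pmf n p)
      (\<lambda>X. real (card {\<phi>\<in>Rs. \<forall>e\<in>F. X (\<phi> ` e)}) ^ k * of_bool (\<forall>f\<in>Q. X f)) \<le> B ^ k * p ^ card Q"
proof (induction k arbitrary: j Q)
  case 0
  then show ?case using expectation_all_true[OF _ p] by (simp add: bounded_pairs_def)
next
  case (Suc k)
  let ?E = "measure_pmf.expectation (rg_pmf n p)"
  let ?N = "\<lambda>X. real (card {\<phi>\<in>Rs. \<forall>e\<in>F. X (\<phi> ` e)})"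
  let ?img = "\<lambda>\<phi>. (\<lambda>e. \<phi> ` e) ` F"
  have Q: "bounded_pairs n m v t Q"
    using Suc.prems by (auto simp: bounded_pairs_def intro: order_trans mult_le_mono1)
  then have B: "0 \<le> B"
    using step[OF Q] p by (meson order_trans sum_nonneg zero_le_power)
  have "?N X ^ Suc k * of_bool (\<forall>f\<in>Q. X f) = (\<Sum>\<phi>\<in>Rs. ?N X ^ k * of_bool (\<forall>f\<in>Q \<union> ?img \<phi>. X f))"
    for X
    by (simp only: power_Suc2 mult.assoc count_times_indicator[OF finRs] sum_distrib_left)
  then have "?E (\<lambda>X. ?N X ^ Suc k * of_bool (\<forall>f\<in>Q. X f))
      = ?E (\<lambda>X. \<Sum>\<phi>\<in>Rs. ?N X ^ k * of_bool (\<forall>f\<in>Q \<union> ?img \<phi>. X f))"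
    by simp
  also have "\<dots> = (\<Sum>\<phi>\<in>Rs. ?E (\<lambda>X. ?N X ^ k * of_bool (\<forall>f\<in>Q \<union> ?img \<phi>. X f)))"
    by (rule Bochner_Integration.integral_sum) (rule integrable_rg_pmf)
  also have "\<dots> \<le> (\<Sum>\<phi>\<in>Rs. B ^ k * p ^ card (Q \<union> ?img \<phi>))"
    using Suc.prems by (intro sum_mono Suc.IH[where j = "j + 1"] bounded_pairs_Un img) auto
  also have "\<dots> = B ^ k * p ^ card Q * (\<Sum>\<phi>\<in>Rs. p ^ card (?img \<phi> - Q))"
  proof -
    have "card (Q \<union> ?img \<phi>) = card Q + card (?img \<phi> - Q)" if "\<phi> \<in> Rs" for \<phi>
      using img[OF that] Q card_Un_disjoint[of Q "?img \<phi> - Q"]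
      by (simp add: bounded_pairs_def Un_Diff_cancel)
    then show ?thesis by (simp add: sum_distrib_left power_add mult.assoc)
  qed
  also have "\<dots> \<le> B ^ k * p ^ card Q * B"
    using step[OF Q] B p by (intro mult_left_mono) auto
  finally show ?case by (simp add: mult.commute mult.left_commute)
qed

lemma moment_count_le:
  fixes Rs :: "('a \<Rightarrow> nat) set" and F :: "'a set set" and B p :: real
  assumes "finite Rs"
    and "\<And>\<phi>. \<phi> \<in> Rs \<Longrightarrow> bounded_pairs n m v 1 ((\<lambda>e. \<phi> ` e) ` F)"
    and "\<And>Q. bounded_pairs n m v t Q \<Longrightarrow> (\<Sum>\<phi>\<in>Rs. p ^ card ((\<lambda>e. \<phi> ` e) ` F - Q)) \<le> B"
    and "0 \<le> p" "p \<le> 1"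
  shows "measure_pmf.expectation (rg_pmf n p) (\<lambda>X. real (card {\<phi>\<in>Rs. \<forall>e\<in>F. X (\<phi> ` e)}) ^ t) \<le> B ^ t"
proof -
  have "measure_pmf.expectation (rg_pmf n p)
      (\<lambda>X. real (card {\<phi>\<in>Rs. \<forall>e\<in>F. X (\<phi> ` e)}) ^ t * of_bool (\<forall>f\<in>{}. X f)) \<le> B ^ t * p ^ card ({} :: nat set set)"
    by (rule moment_count_times_indicator_le[OF assms, where j = 0]) (auto simp: bounded_pairs_def)
  then show ?thesis by simp
qed

lemma power_of_sum_le:
  fixes a :: "'a \<Rightarrow> real"
  assumes fin: "finite I" and ne: "I \<noteq> {}" and nn: "\<And>i. i \<in> I \<Longrightarrow> a i \<ge> 0"
  shows "(\<Sum>i\<in>I. a i) ^ t \<le> real (card I) ^ t * (\<Sum>i\<in>I. a i ^ t)"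
proof -
  have "Max (a ` I) \<in> a ` I" using fin ne by (intro Max_in) auto
  then obtain i0 where i0: "i0 \<in> I" "a i0 = Max (a ` I)" by auto
  have le: "a i \<le> a i0" if "i \<in> I" for i using i0 that fin by auto
  have "(\<Sum>i\<in>I. a i) \<le> (\<Sum>i\<in>I. a i0)" by (intro sum_mono le)
  also have "\<dots> = real (card I) * a i0" by simp
  finally have "(\<Sum>i\<in>I. a i) ^ t \<le> (real (card I) * a i0) ^ t"
    by (intro power_mono) (auto intro!: sum_nonneg nn)
  also have "\<dots> = real (card I) ^ t * a i0 ^ t" by (simp add: power_mult_distrib)
  also have "\<dots> \<le> real (card I) ^ t * (\<Sum>i\<in>I. a i ^ t)"
    by (intro mult_left_mono member_le_sum[OF i0(1)]) (auto intro!: nn fin zero_le_power)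
  finally show ?thesis .
qed

lemma Gval_sq_le:
  assumes "0 < p" "p \<le> 1/2"
  shows "(Gval p X f)^2 \<le> (if X f then (1 - p) / p else 1)"
proof -
  have "0 \<le> (1 - p) / p" "0 \<le> p / (1 - p)" "p / (1 - p) \<le> 1"
    using assms by (auto simp: field_simps)
  then show ?thesis by (auto simp: Gval_def)
qed

section \<open>The moment bound for one block\<close>

context simple_graph_shape
begin

lemma card_E_le: "card E \<le> card V ^ 2"
proof -
  have "E \<subseteq> (\<lambda>(a, b). {a, b}) ` (V \<times> V)"
  proof
    fix e assume e: "e \<in> E"
    then obtain a b where "e = {a, b}" using edgeD by (meson card_2_iff)
    then show "e \<in> (\<lambda>(a, b). {a, b}) ` (V \<times> V)" using edgeD[OF e] by auto
  qed
  then have "card E \<le> card ((\<lambda>(a, b). {a, b}) ` (V \<times> V))"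
    by (intro card_mono) (auto simp: finite_V)
  also have "\<dots> \<le> card (V \<times> V)" by (rule card_image_le) (simp add: finite_V)
  finally show ?thesis by (simp add: card_cartesian_product power2_eq_square)
qed

lemma edge_image_inj_on: "\<phi> \<in> R \<Longrightarrow> inj_on (\<lambda>e. \<phi> ` e) E"
proof (rule inj_onI)
  fix e e' assume a: "\<phi> \<in> R" "e \<in> E" "e' \<in> E" "\<phi> ` e = \<phi> ` e'"
  have "inj_on \<phi> V" using realizationD[OF a(1)] by blast
  then show "e = e'" using inj_on_image_eq_iff[of \<phi> V e e'] edgeD[OF a(2)] edgeD[OF a(3)] a(4) by blast
qed

lemma bounded_pairs_edge_image:
  assumes "\<phi> \<in> R" "F \<subseteq> E"
  shows "bounded_pairs n (card E) (card V) 1 ((\<lambda>e. \<phi> ` e) ` F)"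
proof -
  have inj: "inj_on \<phi> V" and pi: "\<phi> \<in> V \<rightarrow>\<^sub>E {..<n}" using realizationD[OF assms(1)] by auto
  have finF: "finite F" using assms(2) finite_E finite_subset by blast
  have sub: "(\<lambda>e. \<phi> ` e) ` F \<subseteq> pairs_n n"
  proof
    fix f assume "f \<in> (\<lambda>e. \<phi> ` e) ` F"
    then obtain e where e: "e \<in> F" "f = \<phi> ` e" by auto
    have ee: "card e = 2" "e \<subseteq> V" using edgeD e assms(2) by auto
    have "card f = 2" using ee e(2) card_image[OF inj_on_subset[OF inj ee(2)]] by simp
    moreover have "f \<subseteq> {..<n}" using pi ee e(2) by auto
    ultimately show "f \<in> pairs_n n" by (simp add: pairs_n_def)
  qed
  have c: "card ((\<lambda>e. \<phi> ` e) ` F) \<le> card E"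
    by (rule le_trans[OF card_image_le[OF finF] card_mono[OF finite_E assms(2)]])
  have d: "card {f\<in>(\<lambda>e. \<phi> ` e) ` F. x \<in> f} \<le> card V" for x
  proof -
    have "{f\<in>(\<lambda>e. \<phi> ` e) ` F. x \<in> f} \<subseteq> (\<lambda>b. {x, \<phi> b}) ` V"
    proof
      fix f assume f: "f \<in> {f\<in>(\<lambda>e. \<phi> ` e) ` F. x \<in> f}"
      then obtain e where e: "e \<in> F" "f = \<phi> ` e" "x \<in> f" by auto
      obtain a b where ab: "e = {a, b}" using edgeD e assms(2) by (meson card_2_iff subsetD)
      have "a \<in> V" "b \<in> V" using edgeD e assms(2) ab by auto
      then show "f \<in> (\<lambda>b. {x, \<phi> b}) ` V" using e ab by (auto simp: insert_commute)
    qed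
    then have "card {f\<in>(\<lambda>e. \<phi> ` e) ` F. x \<in> f} \<le> card ((\<lambda>b. {x, \<phi> b}) ` V)"
      by (intro card_mono) (auto simp: finite_V)
    also have "\<dots> \<le> card V" by (rule card_image_le[OF finite_V])
    finally show ?thesis .
  qed
  show ?thesis unfolding bounded_pairs_def using finF sub c d by auto
qed

lemma key_class_override:
  assumes "\<phi> \<in> key_class \<sigma>"
  shows "override_on \<sigma> (restrict \<phi> (V - Z)) (V - Z) = \<phi>"
proof
  fix x
  have \<phi>: "\<phi> \<in> V \<rightarrow>\<^sub>E {..<n}" and \<sigma>: "\<sigma> = restrict \<phi> Z"
    using assms realizationD by (auto simp: key_class_def)
  show "override_on \<sigma> (restrict \<phi> (V - Z)) (V - Z) x = \<phi> x"
  proof (cases "x \<in> V")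
    case False
    then show ?thesis using \<phi> Z_subset_V by (auto simp: \<sigma> override_on_def PiE_def extensional_def)
  qed (auto simp: \<sigma> override_on_def)
qed

definition hom_count_bound :: "nat \<Rightarrow> nat set set \<Rightarrow> real" where
  "hom_count_bound t H
     = real n ^ card ((V - Z) - \<Union>H) * (4 * real t) ^ card H * real (card V) ^ card ((V - Z) \<inter> \<Union>H)"

lemma card_key_class_mapping_into_le:
  assumes H: "H \<subseteq> E" and Q: "bounded_pairs n (card E) (card V) t Q" and t: "t \<ge> 1"
  shows "real (card {\<phi>\<in>key_class \<sigma>. \<forall>e\<in>H. \<phi> ` e \<in> Q}) \<le> hom_count_bound t H"
proof -
  let ?A = "V - Z"
  let ?S = "{\<phi>\<in>key_class \<sigma>. \<forall>e\<in>H. \<phi> ` e \<in> Q}"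
  have inj: "inj_on (\<lambda>\<phi>. restrict \<phi> ?A) ?S"
  proof (rule inj_onI)
    fix \<phi> \<psi> assume "\<phi> \<in> ?S" "\<psi> \<in> ?S" and eq: "restrict \<phi> ?A = restrict \<psi> ?A"
    then have "\<phi> = override_on \<sigma> (restrict \<psi> ?A) ?A" using key_class_override[of \<phi>] by simp
    also have "\<dots> = \<psi>" using key_class_override[of \<psi>] \<open>\<psi> \<in> ?S\<close> by simp
    finally show "\<phi> = \<psi>" .
  qed
  have img: "(\<lambda>\<phi>. restrict \<phi> ?A) ` ?S \<subseteq> hom_extensions n \<sigma> Q ?A H"
  proof (rule image_subsetI)
    fix \<phi> assume \<phi>: "\<phi> \<in> ?S"
    then have "\<phi> \<in> V \<rightarrow>\<^sub>E {..<n}" using realizationD by (simp add: key_class_def)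
    then have "restrict \<phi> ?A \<in> ?A \<rightarrow>\<^sub>E {..<n}" by auto
    moreover have "override_on \<sigma> (restrict \<phi> ?A) ?A = \<phi>" using \<phi> key_class_override by simp
    ultimately show "restrict \<phi> ?A \<in> hom_extensions n \<sigma> Q ?A H"
      using \<phi> by (simp add: hom_extensions_def)
  qed
  have "card ?S \<le> card (hom_extensions n \<sigma> Q ?A H)"
    by (rule card_inj_on_le[OF inj img finite_hom_extensions]) (simp add: finite_V)
  moreover have "real (card (hom_extensions n \<sigma> Q ?A H)) \<le> hom_count_bound t H"
    unfolding hom_count_bound_def
  proof (rule card_hom_extensions_le[where L = "t * card E" and D = "t * card V"])
    show "finite H" using H finite_E finite_subset by blast
    show "\<forall>e\<in>H. card e = 2" using H edgeD by auto
    show "finite Q" "\<forall>f\<in>Q. card f = 2" "card Q \<le> t * card E" "\<forall>x. card {f\<in>Q. x \<in> f} \<le> t * card V"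
      using Q by (auto simp: bounded_pairs_def pairs_n_def)
    show "real (t * card V) \<le> real t * real (card V)" by simp
    show "real (t * card E) \<le> real t * real (card V) ^ 2"
      using card_E_le by (simp add: mult_left_mono)
    show "real t \<ge> 1" "0 \<le> real (card V)" "finite ?A" using t finite_V by auto
  qed
  ultimately show ?thesis by linarith
qed

lemma sum_unforced_edges_le:
  assumes F: "F \<subseteq> E" and Q: "bounded_pairs n (card E) (card V) t Q" and t: "t \<ge> 1" and p: "0 \<le> p"
  shows "(\<Sum>\<phi>\<in>key_class \<sigma>. p ^ card ((\<lambda>e. \<phi> ` e) ` F - Q))
    \<le> (\<Sum>H\<in>Pow F. p ^ card (F - H) * hom_count_bound t H)"
proof -
  have finF: "finite F" using F finite_E finite_subset by blast
  have per: "p ^ card ((\<lambda>e. \<phi> ` e) ` F - Q) \<le> (\<Sum>H\<in>Pow F. of_bool (\<forall>e\<in>H. \<phi> ` e \<in> Q) * p ^ card (F - H))"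
    if "\<phi> \<in> key_class \<sigma>" for \<phi>
  proof -
    let ?H = "{e\<in>F. \<phi> ` e \<in> Q}"
    have "inj_on (\<lambda>e. \<phi> ` e) (F - ?H)"
      using edge_image_inj_on[of \<phi>] that F by (auto simp: key_class_def intro: inj_on_subset)
    moreover have "(\<lambda>e. \<phi> ` e) ` F - Q = (\<lambda>e. \<phi> ` e) ` (F - ?H)" by auto
    ultimately have "p ^ card ((\<lambda>e. \<phi> ` e) ` F - Q) = of_bool (\<forall>e\<in>?H. \<phi> ` e \<in> Q) * p ^ card (F - ?H)"
      by (simp add: card_image)
    also have "\<dots> \<le> (\<Sum>H\<in>Pow F. of_bool (\<forall>e\<in>H. \<phi> ` e \<in> Q) * p ^ card (F - H))"
      by (rule member_le_sum[where f = "\<lambda>H. of_bool (\<forall>e\<in>H. \<phi> ` e \<in> Q) * p ^ card (F - H)"])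
         (use finF p in auto)
    finally show ?thesis .
  qed
  have "(\<Sum>\<phi>\<in>key_class \<sigma>. p ^ card ((\<lambda>e. \<phi> ` e) ` F - Q))
      \<le> (\<Sum>\<phi>\<in>key_class \<sigma>. \<Sum>H\<in>Pow F. of_bool (\<forall>e\<in>H. \<phi> ` e \<in> Q) * p ^ card (F - H))"
    by (intro sum_mono per)
  also have "\<dots> = (\<Sum>H\<in>Pow F. p ^ card (F - H) * real (card {\<phi>\<in>key_class \<sigma>. \<forall>e\<in>H. \<phi> ` e \<in> Q}))"
    by (subst sum.swap) (simp add: sum_distrib_right[symmetric] finite_key_class Int_def conj_commute mult.commute)
  also have "\<dots> \<le> (\<Sum>H\<in>Pow F. p ^ card (F - H) * hom_count_bound t H)"
    using F Q t p by (intro sum_mono mult_left_mono card_key_class_mapping_into_le) auto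
  finally show ?thesis .
qed

lemma hom_count_bound_nonneg: "0 \<le> hom_count_bound t H"
  by (simp add: hom_count_bound_def)

definition dominant_term :: "real \<Rightarrow> real" where
  "dominant_term q = Max {q ^ card (edges_in \<tau> S) * real n ^ (card V - card S) | S. Z \<subseteq> S \<and> S \<subseteq> V}"

lemma finite_edges_in: "finite (edges_in \<tau> S)"
  using finite_E by (simp add: edges_in_def)

lemma finite_intermediate_sets: "finite {S. Z \<subseteq> S \<and> S \<subseteq> V}"
  by (rule finite_subset[of _ "Pow V"]) (auto simp: finite_V)

lemma dominant_term_ge:
  assumes "Z \<subseteq> S" "S \<subseteq> V"
  shows "q ^ card (edges_in \<tau> S) * real n ^ (card V - card S) \<le> dominant_term q"
  unfolding dominant_term_def
proof (rule Max_ge)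
  have "{q ^ card (edges_in \<tau> S) * real n ^ (card V - card S) | S. Z \<subseteq> S \<and> S \<subseteq> V}
      = (\<lambda>S. q ^ card (edges_in \<tau> S) * real n ^ (card V - card S)) ` {S. Z \<subseteq> S \<and> S \<subseteq> V}"
    by auto
  then show "finite {q ^ card (edges_in \<tau> S) * real n ^ (card V - card S) | S. Z \<subseteq> S \<and> S \<subseteq> V}"
    using finite_intermediate_sets by simp
qed (use assms in blast)

lemma dominant_term_nonneg:
  assumes "q \<ge> 0"
  shows "dominant_term q \<ge> 0"
proof -
  have "0 \<le> q ^ card (edges_in \<tau> Z) * real n ^ (card V - card Z)" using assms by simp
  also have "\<dots> \<le> dominant_term q" using Z_subset_V by (intro dominant_term_ge) auto
  finally show ?thesis .
qed

lemma hom_count_bound_le_dominant_term: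
  assumes H: "H \<subseteq> E" and q: "q \<ge> 1" and t: "t \<ge> 1"
  shows "q ^ card H * hom_count_bound t H \<le> (4 * real t) ^ card E * real (card V) ^ card V * dominant_term q"
proof -
  define S where "S = Z \<union> \<Union>H"
  have S: "Z \<subseteq> S" "S \<subseteq> V" using H edgeD Z_subset_V by (auto simp: S_def)
  have card_free: "card ((V - Z) - \<Union>H) = card V - card S"
  proof -
    have "(V - Z) - \<Union>H = V - S" by (auto simp: S_def)
    then show ?thesis using card_Diff_subset[OF finite_subset[OF S(2) finite_V] S(2)] by simp
  qed
  have factors: "q ^ card H * ((4 * real t) ^ card H * real (card V) ^ card ((V - Z) \<inter> \<Union>H))
      \<le> q ^ card (edges_in \<tau> S) * ((4 * real t) ^ card E * real (card V) ^ card V)"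
  proof (intro mult_mono)
    show "q ^ card H \<le> q ^ card (edges_in \<tau> S)"
      using H q by (intro power_increasing card_mono finite_edges_in) (auto simp: edges_in_def S_def)
    show "(4 * real t) ^ card H \<le> (4 * real t) ^ card E"
      using H t by (intro power_increasing card_mono finite_E) auto
    show "real (card V) ^ card ((V - Z) \<inter> \<Union>H) \<le> real (card V) ^ card V"
    proof (cases "V = {}")
      case False
      then show ?thesis using finite_V
        by (intro power_increasing card_mono) (auto simp: Suc_le_eq card_gt_0_iff)
    qed simp
  qed (use q in auto)
  have "q ^ card H * hom_count_bound t H
      = real n ^ (card V - card S) * (q ^ card H * ((4 * real t) ^ card H * real (card V) ^ card ((V - Z) \<inter> \<Union>H)))"
    unfolding hom_count_bound_def card_free by (simp add: ac_simps)
  also have "\<dots> \<le> real n ^ (card V - card S) * (q ^ card (edges_in \<tau> S) * ((4 * real t) ^ card E * real (card V) ^ card V))"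
    by (intro mult_left_mono factors) simp
  also have "\<dots> = (4 * real t) ^ card E * real (card V) ^ card V * (q ^ card (edges_in \<tau> S) * real n ^ (card V - card S))"
    by (simp add: ac_simps)
  also have "\<dots> \<le> (4 * real t) ^ card E * real (card V) ^ card V * dominant_term q"
    by (intro mult_left_mono dominant_term_ge S) auto
  finally show ?thesis .
qed

lemma scaled_sum_unforced_le:
  assumes F: "F \<subseteq> E" and p: "0 < p" "p \<le> 1/2" and t: "t \<ge> 1"
  shows "((1 - p) / p) ^ card F * (\<Sum>H\<in>Pow F. p ^ card (F - H) * hom_count_bound t H)
    \<le> 2 ^ card E * ((4 * real t) ^ card E * real (card V) ^ card V * dominant_term ((1 - p) / p))"
proof -
  define q where "q = (1 - p) / p"
  define K where "K = (4 * real t) ^ card E * real (card V) ^ card V * dominant_term q"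
  have q: "q \<ge> 1" "q * p \<le> 1" using p by (auto simp: q_def field_simps)
  have finF: "finite F" using F finite_E finite_subset by blast
  have bound: "q ^ card F * p ^ card (F - H) * hom_count_bound t H \<le> K" if "H \<subseteq> F" for H
  proof -
    have "card F = card H + card (F - H)"
      using that finF by (simp add: card_Diff_subset finite_subset card_mono)
    then have "q ^ card F * p ^ card (F - H) = q ^ card H * (q * p) ^ card (F - H)"
      by (simp add: power_add power_mult_distrib)
    also have "\<dots> \<le> q ^ card H"
      using q p by (intro mult_left_le power_le_one) auto
    finally have "q ^ card F * p ^ card (F - H) * hom_count_bound t H \<le> q ^ card H * hom_count_bound t H"
      by (rule mult_right_mono[OF _ hom_count_bound_nonneg])
    also have "\<dots> \<le> K"
      unfolding K_def using that F q t by (intro hom_count_bound_le_dominant_term) auto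
    finally show ?thesis .
  qed
  have "q ^ card F * (\<Sum>H\<in>Pow F. p ^ card (F - H) * hom_count_bound t H)
      = (\<Sum>H\<in>Pow F. q ^ card F * p ^ card (F - H) * hom_count_bound t H)"
    by (simp add: sum_distrib_left mult.assoc)
  also have "\<dots> \<le> real (card (Pow F)) * K"
    by (rule sum_bounded_above) (use bound in auto)
  also have "\<dots> \<le> 2 ^ card E * K"
  proof (rule mult_right_mono)
    have "card (Pow F) \<le> 2 ^ card E"
      using finF card_mono[OF finite_E F] by (simp add: card_Pow power_increasing)
    then show "real (card (Pow F)) \<le> 2 ^ card E" by (metis of_nat_le_iff of_nat_numeral of_nat_power)
    show "0 \<le> K" using q by (simp add: K_def dominant_term_nonneg)
  qed
  finally show ?thesis by (simp add: q_def K_def)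
qed

lemma weight_sq_le:
  assumes p: "0 < p" "p \<le> 1/2"
  shows "(weight (Gval p X) \<phi>)^2 \<le> (\<Sum>F\<in>Pow E. of_bool (\<forall>e\<in>F. X (\<phi> ` e)) * ((1 - p) / p) ^ card F)"
proof -
  define q where "q = (1 - p) / p"
  have "(weight (Gval p X) \<phi>)^2 = (\<Prod>e\<in>E. (Gval p X (\<phi> ` e))^2)"
    by (simp add: weight_def power_mult_distrib prod_power_distrib)
  also have "\<dots> \<le> (\<Prod>e\<in>E. if X (\<phi> ` e) then q else 1)"
  proof (rule prod_mono)
    fix e
    show "0 \<le> (Gval p X (\<phi> ` e))^2 \<and> (Gval p X (\<phi> ` e))^2 \<le> (if X (\<phi> ` e) then q else 1)"
      using Gval_sq_le[OF p, of X "\<phi> ` e"] by (auto simp: q_def split: if_splits)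
  qed
  also have "\<dots> = q ^ card {e\<in>E. X (\<phi> ` e)}"
    by (simp add: prod.If_cases[OF finite_E] Int_def conj_commute)
  also have "\<dots> \<le> (\<Sum>F\<in>Pow E. of_bool (\<forall>e\<in>F. X (\<phi> ` e)) * q ^ card F)"
    using member_le_sum[where f = "\<lambda>F. of_bool (\<forall>e\<in>F. X (\<phi> ` e)) * q ^ card F" and i = "{e\<in>E. X (\<phi> ` e)}"]
      finite_E p by (auto simp: q_def)
  finally show ?thesis by (simp add: q_def)
qed

lemma key_block_mass_pow_le:
  assumes p: "0 < p" "p \<le> 1/2"
  shows "(\<Sum>\<phi>\<in>key_class \<sigma>. (weight (Gval p X) \<phi>)^2) ^ t
    \<le> (2 ^ card E) ^ t
       * (\<Sum>F\<in>Pow E. (((1 - p) / p) ^ card F * real (card {\<phi>\<in>key_class \<sigma>. \<forall>e\<in>F. X (\<phi> ` e)})) ^ t)"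
proof -
  define q where "q = (1 - p) / p"
  have q: "q \<ge> 1" using p by (simp add: q_def field_simps)
  have "(\<Sum>\<phi>\<in>key_class \<sigma>. (weight (Gval p X) \<phi>)^2)
      \<le> (\<Sum>\<phi>\<in>key_class \<sigma>. \<Sum>F\<in>Pow E. of_bool (\<forall>e\<in>F. X (\<phi> ` e)) * q ^ card F)"
    unfolding q_def by (intro sum_mono weight_sq_le p)
  also have "\<dots> = (\<Sum>F\<in>Pow E. q ^ card F * real (card {\<phi>\<in>key_class \<sigma>. \<forall>e\<in>F. X (\<phi> ` e)}))"
    by (subst sum.swap) (simp add: sum_distrib_right[symmetric] finite_key_class Int_def conj_commute mult.commute)
  finally have "(\<Sum>\<phi>\<in>key_class \<sigma>. (weight (Gval p X) \<phi>)^2) ^ t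
      \<le> (\<Sum>F\<in>Pow E. q ^ card F * real (card {\<phi>\<in>key_class \<sigma>. \<forall>e\<in>F. X (\<phi> ` e)})) ^ t"
    by (intro power_mono sum_nonneg) auto
  also have "\<dots> \<le> real (card (Pow E)) ^ t
      * (\<Sum>F\<in>Pow E. (q ^ card F * real (card {\<phi>\<in>key_class \<sigma>. \<forall>e\<in>F. X (\<phi> ` e)})) ^ t)"
    by (rule power_of_sum_le) (use finite_E q in auto)
  finally show ?thesis using finite_E by (simp add: card_Pow q_def)
qed

lemma moment_rare_count_le:
  assumes F: "F \<subseteq> E" and p: "0 \<le> p" "p \<le> 1" and t: "t \<ge> 1"
  shows "measure_pmf.expectation (rg_pmf n p) (\<lambda>X. real (card {\<phi>\<in>key_class \<sigma>. \<forall>e\<in>F. X (\<phi> ` e)}) ^ t)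
    \<le> (\<Sum>H\<in>Pow F. p ^ card (F - H) * hom_count_bound t H) ^ t"
proof (rule moment_count_le[where m = "card E" and v = "card V"])
  show "bounded_pairs n (card E) (card V) 1 ((\<lambda>e. \<phi> ` e) ` F)" if "\<phi> \<in> key_class \<sigma>" for \<phi>
    using that F by (intro bounded_pairs_edge_image) (auto simp: key_class_def)
  show "(\<Sum>\<phi>\<in>key_class \<sigma>. p ^ card ((\<lambda>e. \<phi> ` e) ` F - Q)) \<le> (\<Sum>H\<in>Pow F. p ^ card (F - H) * hom_count_bound t H)"
    if "bounded_pairs n (card E) (card V) t Q" for Q
    by (rule sum_unforced_edges_le[OF F that t p(1)])
qed (use p finite_key_class in auto)

lemma expectation_key_block_le:
  assumes p: "0 < p" "p \<le> 1/2" and t: "t \<ge> 1"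
  shows "measure_pmf.expectation (rg_pmf n p) (\<lambda>X. (\<Sum>\<phi>\<in>key_class \<sigma>. (weight (Gval p X) \<phi>)^2) ^ t)
    \<le> (32 * real t) ^ (card E * t) * real (card V) ^ (card V * t) * dominant_term ((1 - p) / p) ^ t"
proof -
  define q where "q = (1 - p) / p"
  define c :: real where "c = 2 ^ card E"
  define K where "K = (4 * real t) ^ card E * real (card V) ^ card V * dominant_term q"
  define N where "N F X = real (card {\<phi>\<in>key_class \<sigma>. \<forall>e\<in>F. X (\<phi> ` e)})" for F and X :: "nat set \<Rightarrow> bool"
  let ?E = "measure_pmf.expectation (rg_pmf n p)"
  have q: "q \<ge> 1" using p by (simp add: q_def field_simps)
  have K: "K \<ge> 0" using q by (simp add: K_def dominant_term_nonneg)
  have "?E (\<lambda>X. (\<Sum>\<phi>\<in>key_class \<sigma>. (weight (Gval p X) \<phi>)^2) ^ t)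
      \<le> ?E (\<lambda>X. c ^ t * (\<Sum>F\<in>Pow E. (q ^ card F * N F X) ^ t))"
    unfolding c_def q_def N_def by (intro integral_mono integrable_rg_pmf key_block_mass_pow_le p)
  also have "\<dots> = c ^ t * (\<Sum>F\<in>Pow E. (q ^ card F) ^ t * ?E (\<lambda>X. N F X ^ t))"
    by (simp add: Bochner_Integration.integral_sum integrable_rg_pmf power_mult_distrib)
  also have "\<dots> \<le> c ^ t * (\<Sum>F\<in>Pow E. (c * K) ^ t)"
  proof (intro mult_left_mono sum_mono)
    fix F assume "F \<in> Pow E"
    then have F: "F \<subseteq> E" by auto
    let ?B = "\<Sum>H\<in>Pow F. p ^ card (F - H) * hom_count_bound t H"
    have "(q ^ card F) ^ t * ?E (\<lambda>X. N F X ^ t) \<le> (q ^ card F) ^ t * ?B ^ t"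
      unfolding N_def using q p t by (intro mult_left_mono moment_rare_count_le F) auto
    also have "\<dots> = (q ^ card F * ?B) ^ t" by (simp add: power_mult_distrib)
    also have "\<dots> \<le> (c * K) ^ t"
    proof (rule power_mono)
      show "q ^ card F * ?B \<le> c * K"
        using scaled_sum_unforced_le[OF F p t] by (simp add: q_def c_def K_def)
      show "0 \<le> q ^ card F * ?B"
        using q p by (intro mult_nonneg_nonneg sum_nonneg hom_count_bound_nonneg) auto
    qed
    finally show "(q ^ card F) ^ t * ?E (\<lambda>X. N F X ^ t) \<le> (c * K) ^ t" .
  qed (simp add: c_def)
  also have "\<dots> = c ^ t * c * (c * K) ^ t"
    using finite_E by (simp add: card_Pow c_def)
  also have "\<dots> \<le> c ^ t * c ^ t * (c * K) ^ t"
  proof -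
    have "c \<le> c ^ t" using power_increasing[of 1 t c] t by (simp add: c_def)
    then show ?thesis using K by (intro mult_right_mono mult_left_mono) (simp_all add: c_def)
  qed
  also have "\<dots> = (c * c * c * K) ^ t"
    by (simp only: power_mult_distrib mult.assoc)
  also have "c * c * c * K = (2 * 2 * 2 * (4 * real t)) ^ card E * (real (card V) ^ card V * dominant_term q)"
    unfolding c_def K_def by (simp only: power_mult_distrib mult.assoc)
  also have "(2 * 2 * 2 * (4 * real t)) = 32 * real t"
    by simp
  also have "((32 * real t) ^ card E * (real (card V) ^ card V * dominant_term q)) ^ t
      = (32 * real t) ^ (card E * t) * real (card V) ^ (card V * t) * dominant_term q ^ t"
    by (simp only: power_mult_distrib power_mult mult.assoc)
  finally show ?thesis by (simp add: q_def)
qed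

lemma expected_schatten_pow_le:
  assumes p: "0 < p" "p \<le> 1/2" and t: "t \<ge> 2"
  shows "measure_pmf.expectation (rg_pmf n p) (\<lambda>X. schatten_pow (tuples n) (graph_matrix n \<tau> (Gval p X)) t)
    \<le> real n ^ card V
       * ((32 * real t) ^ (card E * t) * real (card V) ^ (card V * t) * dominant_term ((1 - p) / p) ^ t)"
proof -
  let ?E = "measure_pmf.expectation (rg_pmf n p)"
  let ?keys = "(\<lambda>\<phi>. restrict \<phi> Z) ` R"
  let ?bound = "(32 * real t) ^ (card E * t) * real (card V) ^ (card V * t) * dominant_term ((1 - p) / p) ^ t"
  have "?E (\<lambda>X. schatten_pow (tuples n) (graph_matrix n \<tau> (Gval p X)) t)
      \<le> ?E (\<lambda>X. \<Sum>\<sigma>\<in>?keys. (\<Sum>\<phi>\<in>key_class \<sigma>. (weight (Gval p X) \<phi>)^2) ^ t)"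
    by (intro integral_mono integrable_rg_pmf schatten_pow_le_key_blocks t)
  also have "\<dots> = (\<Sum>\<sigma>\<in>?keys. ?E (\<lambda>X. (\<Sum>\<phi>\<in>key_class \<sigma>. (weight (Gval p X) \<phi>)^2) ^ t))"
    by (rule Bochner_Integration.integral_sum) (rule integrable_rg_pmf)
  also have "\<dots> \<le> (\<Sum>\<sigma>\<in>?keys. ?bound)"
    using t by (intro sum_mono expectation_key_block_le p) auto
  also have "\<dots> = real (card ?keys) * ?bound"
    by simp
  also have "\<dots> \<le> real n ^ card V * ?bound"
  proof (rule mult_right_mono)
    have "card ?keys \<le> n ^ card V"
      using card_image_le[OF finite_realizations[OF finite_V]] card_realizations_le[OF finite_V]
      by (rule order_trans)
    then show "real (card ?keys) \<le> real n ^ card V"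
      by (metis of_nat_le_iff of_nat_power)
    show "0 \<le> ?bound"
      using p by (simp add: dominant_term_nonneg)
  qed
  finally show ?thesis .
qed

lemma dominant_term_pow_le:
  "dominant_term q ^ t
    \<le> Max {q ^ (t * card (edges_in \<tau> S)) * real n ^ (t * (card V - card S)) | S. Z \<subseteq> S \<and> S \<subseteq> V}"
proof -
  have image_eq: "{f S | S. Z \<subseteq> S \<and> S \<subseteq> V} = f ` {S. Z \<subseteq> S \<and> S \<subseteq> V}" for f :: "nat set \<Rightarrow> real"
    by auto
  have "dominant_term q \<in> {q ^ card (edges_in \<tau> S) * real n ^ (card V - card S) | S. Z \<subseteq> S \<and> S \<subseteq> V}"
    unfolding dominant_term_def
    by (rule Max_in) (use Z_subset_V finite_intermediate_sets in \<open>auto simp: image_eq\<close>)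
  then obtain S where S: "Z \<subseteq> S" "S \<subseteq> V"
    and eq: "dominant_term q = q ^ card (edges_in \<tau> S) * real n ^ (card V - card S)"
    by blast
  have "dominant_term q ^ t = q ^ (t * card (edges_in \<tau> S)) * real n ^ (t * (card V - card S))"
    unfolding eq power_mult_distrib by (simp only: power_mult[symmetric] mult.commute)
  also have "\<dots> \<le> Max {q ^ (t * card (edges_in \<tau> S)) * real n ^ (t * (card V - card S)) | S. Z \<subseteq> S \<and> S \<subseteq> V}"
    by (rule Max_ge) (use S finite_intermediate_sets in \<open>auto simp: image_eq\<close>)
  finally show ?thesis .
qed

end

theorem mainTheorem20:
  "\<exists>C>0. \<forall>(n::nat) (p::real) (\<tau>::shape) (t::nat).
     0 < p \<and> p \<le> 1/2 \<and> simple_shape \<tau> \<and> even t \<and> t \<ge> 2 \<longrightarrow>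
     measure_pmf.expectation (rg_pmf n p)
       (\<lambda>X. schatten_pow (tuples n) (graph_matrix n \<tau> (Gval p X)) t)
     \<le> (real n ^ card (sV \<tau>) * (C * real t) ^ (t * card (sE \<tau>))
          * real (card (sV \<tau>)) ^ (t * card (sV \<tau>)))
       * Max {((1 - p) / p) ^ (t * card (edges_in \<tau> S)) * real n ^ (t * (card (sV \<tau>) - card S)) | S.
                set (sU \<tau>) \<inter> set (sW \<tau>) \<subseteq> S \<and> S \<subseteq> sV \<tau>}"
proof (intro exI[of _ 32] conjI allI impI)
  fix n :: nat and p :: real and \<tau> :: shape and t :: nat
  assume "0 < p \<and> p \<le> 1/2 \<and> simple_shape \<tau> \<and> even t \<and> t \<ge> 2"
  then have p: "0 < p" "p \<le> 1/2" and simple: "simple_shape \<tau>" and t: "t \<ge> 2"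
    by auto
  interpret simple_graph_shape n \<tau>
    by (rule simple_graph_shape.intro[OF simple])
  let ?M = "Max {((1 - p) / p) ^ (t * card (edges_in \<tau> S)) * real n ^ (t * (card (sV \<tau>) - card S)) | S.
                set (sU \<tau>) \<inter> set (sW \<tau>) \<subseteq> S \<and> S \<subseteq> sV \<tau>}"
  let ?C = "real n ^ card (sV \<tau>) * (32 * real t) ^ (t * card (sE \<tau>)) * real (card (sV \<tau>)) ^ (t * card (sV \<tau>))"
  have "measure_pmf.expectation (rg_pmf n p) (\<lambda>X. schatten_pow (tuples n) (graph_matrix n \<tau> (Gval p X)) t)
      \<le> ?C * dominant_term ((1 - p) / p) ^ t"
    using expected_schatten_pow_le[OF p t]
    by (simp only: mult.assoc mult.commute[of "card (sE \<tau>)" t] mult.commute[of "card (sV \<tau>)" t])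
  also have "\<dots> \<le> ?C * ?M"
    by (intro mult_left_mono dominant_term_pow_le) simp
  finally show "measure_pmf.expectation (rg_pmf n p) (\<lambda>X. schatten_pow (tuples n) (graph_matrix n \<tau> (Gval p X)) t)
      \<le> ?C * ?M" .
qed simp

end
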